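(* Under the assumptions of the following setting: (CVX), (SM), (BV) hold; $i\in[n]$ and a round $p$ of PEARL-SGD are fixed; $\gamma_k\equiv\gamma$ for $k=\tau p,\dots,\tau(p+1)-1$ with $0<\gamma\le\frac1{L_i}\min\{1,\frac1{\tau-1}\}$ (with $\frac{1}{\tau-1}=+\infty$ if $\tau=1$). Then for $j=\tau p+1,\dots,\tau(p+1)$, $$\mathbb{E}\big[\|\nabla f_i(x^i_j;x^{-i}_{\tau p})\|^2\,\big|\,\mathbf{x}_{\tau p}\big]\le\|\nabla f_i(x^i_{\tau p};x^{-i}_{\tau p})\|^2+2(j-\tau p)\gamma L_i\sigma_i^2.$$
   Context: Setup. Let $n\ge1$, $D=d_1+\dots+d_n$, joint action $\mathbf{x}=(x^1,\dots,x^n)\in\mathbb{R}^D$, $x^i\in\mathbb{R}^{d_i}$, $x^{-i}$ all blocks except the $i$-th, $f_i(x^i;x^{-i})=f_i(\mathbf{x})$. For each $i$, $f_i(\mathbf{x})=\mathbb{E}_{\xi\sim\mathcal{D}_i}[f_{i,\xi}(\mathbf{x})]$; $\nabla f_i(x^i;x^{-i})$, $\nabla f_{i,\xi}(x^i;x^{-i})$ are gradients in $x^i$ only, with $\mathbb{E}_{\xi\sim\mathcal{D}_i}[\nabla f_{i,\xi}(x^i;x^{-i})]=\nabla f_i(x^i;x^{-i})$. (CVX): each $f_i(\cdot;x^{-i})$ is convex. (SM): $\|\nabla f_i(x^i;x^{-i})-\nabla f_i(y^i;x^{-i})\|\le L_i\|x^i-y^i\|$. (BV): $\mathbb{E}_{\xi\sim\mathcal{D}_i}\|\nabla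 f_{i,\xi}(x^i;x^{-i})-\nabla f_i(x^i;x^{-i})\|^2\le\sigma_i^2$ for all $x^i,x^{-i}$. PEARL-SGD: given $\mathbf{x}_0$, $\tau\ge1$, $R\ge1$, step-sizes $\gamma_k>0$: for $p=0,\dots,R-1$, each $i$, $k=\tau p,\dots,\tau(p+1)-1$, draw $\xi^i_k\sim\mathcal{D}_i$ independently of the past and set $x^i_{k+1}=x^i_k-\gamma_k\nabla f_{i,\xi^i_k}(x^i_k;x^{-i}_{\tau p})$; $\mathbf{x}_k=(x^1_k,\dots,x^n_k)$. *)

theory Defs
  imports "HOL-Probability.Probability"
begin

text \<open>Given the state at the start of the round (own block x0 = x^i_{tau p} and the
  frozen opponents' block z = x^{-i}_{tau p}), constant step size gamma and the
  sample sequence omega (omega t plays the role of xi^i_{tau p + t}),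
  pearl_local G gamma x0 z omega t is x^i_{tau p + t}.\<close>
primrec pearl_local ::
  "('b \<Rightarrow> 'a::real_normed_vector \<Rightarrow> 'c \<Rightarrow> 'a) \<Rightarrow> real \<Rightarrow> 'a \<Rightarrow> 'c \<Rightarrow> (nat \<Rightarrow> 'b) \<Rightarrow> nat \<Rightarrow> 'a"
where
  "pearl_local G \<gamma> x0 z \<omega> 0 = x0"
| "pearl_local G \<gamma> x0 z \<omega> (Suc t) =
     pearl_local G \<gamma> x0 z \<omega> t - \<gamma> *\<^sub>R G (\<omega> t) (pearl_local G \<gamma> x0 z \<omega> t) z"

end

theory Submission
  imports Defs
begin

text \<open>For a convex function F with L-Lipschitz gradient and 0 < \<gamma>L \<le> 1, cocoercivity of the
  gradient gives the pathwise bound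
  \<parallel>\<nabla>F(x - \<gamma>g)\<parallel>^2 \<le> \<parallel>\<nabla>F x\<parallel>^2 + \<gamma>L \<parallel>g - \<nabla>F x\<parallel>^2 for every direction g.
  Taking g to be the stochastic gradient at the current local iterate and integrating over
  the fresh sample, the bounded variance adds at most \<gamma>L\<sigma>^2 per local step; induction over the
  steps of the round gives the claim, even with \<gamma>L\<sigma>^2 in place of 2\<gamma>L\<sigma>^2.\<close>

lemma convex_on_ge_linearization:
  fixes F :: "'a::real_inner \<Rightarrow> real" and DF :: "'a \<Rightarrow> 'a"
  assumes cv: "convex_on UNIV F"
    and der: "\<And>y. (F has_derivative (\<lambda>h. DF y \<bullet> h)) (at y)"
  shows "F x + DF x \<bullet> (w - x) \<le> F w"
proof -
  define g where "g t = F (x + t *\<^sub>R (w - x))" for t :: real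
  have "convex_on UNIV g"
    unfolding g_def
  proof (rule convex_onI)
    fix t a b :: real assume t: "0 < t" "t < 1"
    have "x + ((1 - t) *\<^sub>R a + t *\<^sub>R b) *\<^sub>R (w - x)
        = (1 - t) *\<^sub>R (x + a *\<^sub>R (w - x)) + t *\<^sub>R (x + b *\<^sub>R (w - x))"
      by (simp add: algebra_simps)
    then show "F (x + ((1 - t) *\<^sub>R a + t *\<^sub>R b) *\<^sub>R (w - x))
        \<le> (1 - t) * F (x + a *\<^sub>R (w - x)) + t * F (x + b *\<^sub>R (w - x))"
      using t by (auto intro!: convex_onD[OF cv])
  qed auto
  moreover have "(g has_field_derivative DF x \<bullet> (w - x)) (at 0 within UNIV)"
  proof -
    have "((\<lambda>t. x + t *\<^sub>R (w - x)) has_derivative (\<lambda>t. t *\<^sub>R (w - x))) (at 0)"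
      by (auto intro!: derivative_eq_intros)
    from has_derivative_compose[OF this der[of "x + 0 *\<^sub>R (w - x)"]]
    have "(g has_derivative (\<lambda>t. DF x \<bullet> (t *\<^sub>R (w - x)))) (at 0)"
      unfolding g_def[abs_def] by (simp add: o_def)
    then show ?thesis
      unfolding has_field_derivative_def by (rule has_derivative_eq_rhs) (auto simp: fun_eq_iff)
  qed
  ultimately have "g 1 - g 0 \<ge> DF x \<bullet> (w - x) * (1 - 0)"
    by (intro convex_on_imp_above_tangent[where A=UNIV]) auto
  then show ?thesis by (simp add: g_def)
qed

lemma lipschitz_gradient_upper_bound:
  fixes F :: "'a::real_inner \<Rightarrow> real" and DF :: "'a \<Rightarrow> 'a"
  assumes der: "\<And>y. (F has_derivative (\<lambda>h. DF y \<bullet> h)) (at y)"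
    and lip: "\<And>y y'. norm (DF y - DF y') \<le> L * norm (y - y')"
  shows "F v \<le> F u + DF u \<bullet> (v - u) + L / 2 * (norm (v - u))\<^sup>2"
proof -
  define d where "d = v - u"
  define h where "h t = F (u + t *\<^sub>R d) - t * (DF u \<bullet> d) - L / 2 * t\<^sup>2 * (norm d)\<^sup>2" for t
  have "h 1 \<le> h 0"
  proof (rule DERIV_nonpos_imp_nonincreasing[where f=h], simp)
    fix t :: real assume t: "0 \<le> t" "t \<le> 1"
    have "((\<lambda>t. u + t *\<^sub>R d) has_derivative (\<lambda>s. s *\<^sub>R d)) (at t)"
      by (auto intro!: derivative_eq_intros)
    from has_derivative_compose[OF this der[of "u + t *\<^sub>R d"]]
    have "((\<lambda>t. F (u + t *\<^sub>R d)) has_real_derivative DF (u + t *\<^sub>R d) \<bullet> d) (at t)"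
      unfolding has_field_derivative_def o_def
      by (rule has_derivative_eq_rhs) (auto simp: fun_eq_iff)
    then have "(h has_real_derivative
        (DF (u + t *\<^sub>R d) - DF u) \<bullet> d - L * t * (norm d)\<^sup>2) (at t)"
      unfolding h_def by (auto intro!: derivative_eq_intros simp: inner_diff_left)
    moreover have "(DF (u + t *\<^sub>R d) - DF u) \<bullet> d \<le> L * t * (norm d)\<^sup>2"
    proof -
      have "(DF (u + t *\<^sub>R d) - DF u) \<bullet> d \<le> norm (DF (u + t *\<^sub>R d) - DF u) * norm d"
        by (rule norm_cauchy_schwarz)
      also have "\<dots> \<le> L * norm (t *\<^sub>R d) * norm d"
        using lip[of "u + t *\<^sub>R d" u] by (intro mult_right_mono) auto
      also have "\<dots> = L * t * (norm d)\<^sup>2"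
        using t by (simp add: power2_eq_square)
      finally show ?thesis .
    qed
    ultimately show "\<exists>y. (h has_real_derivative y) (at t) \<and> y \<le> 0"
      by (intro exI conjI) auto
  qed
  then show ?thesis by (simp add: h_def d_def algebra_simps)
qed

lemma convex_lipschitz_gradient_cocoercive:
  fixes F :: "'a::real_inner \<Rightarrow> real" and DF :: "'a \<Rightarrow> 'a"
  assumes cv: "convex_on UNIV F"
    and der: "\<And>y. (F has_derivative (\<lambda>h. DF y \<bullet> h)) (at y)"
    and lip: "\<And>y y'. norm (DF y - DF y') \<le> L * norm (y - y')"
    and L: "L > 0"
  shows "(norm (DF y - DF x))\<^sup>2 \<le> L * ((DF y - DF x) \<bullet> (y - x))"
proof -
  have half: "F x - F y + DF x \<bullet> (y - x) \<le> - (norm (DF y - DF x))\<^sup>2 / (2 * L)" for x y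
  proof -
    define d where "d = DF y - DF x"
    \<comment> \<open>w minimises the quadratic upper bound of F around y\<close>
    define w where "w = y - (1 / L) *\<^sub>R d"
    have tangent: "F x + DF x \<bullet> (w - x) \<le> F w"
      by (rule convex_on_ge_linearization[OF cv der])
    have upper: "F w \<le> F y + DF y \<bullet> (w - y) + L / 2 * (norm (w - y))\<^sup>2"
      by (rule lipschitz_gradient_upper_bound[OF der lip])
    have w_terms: "DF x \<bullet> (w - x) = DF x \<bullet> (y - x) - (1/L) * (DF x \<bullet> d)"
        "DF y \<bullet> (w - y) = - (1/L) * (DF y \<bullet> d)"
        "(norm (w - y))\<^sup>2 = (1/L)\<^sup>2 * (d \<bullet> d)"
      using L by (simp_all add: w_def algebra_simps inner_diff_right power_divide power2_norm_eq_inner)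
    have "F x - F y + DF x \<bullet> (y - x)
        \<le> (1/L) * (DF x \<bullet> d) - (1/L) * (DF y \<bullet> d) + L / 2 * ((1/L)\<^sup>2 * (d \<bullet> d))"
      using tangent upper unfolding w_terms by linarith
    also have "\<dots> = - (d \<bullet> d) / (2 * L)"
      using L by (simp add: d_def inner_diff_left field_simps power2_eq_square)
    finally show ?thesis by (simp add: d_def power2_norm_eq_inner)
  qed
  from half[of x y] half[of y x]
  have "(norm (DF y - DF x))\<^sup>2 / L \<le> (DF y - DF x) \<bullet> (y - x)"
    by (simp add: norm_minus_commute inner_diff_left inner_diff_right inner_commute field_simps)
  then show ?thesis using L by (simp add: field_simps)
qed

lemma gradient_norm_after_step_le:
  fixes F :: "'a::real_inner \<Rightarrow> real" and DF :: "'a \<Rightarrow> 'a"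
  assumes cv: "convex_on UNIV F"
    and der: "\<And>y. (F has_derivative (\<lambda>h. DF y \<bullet> h)) (at y)"
    and lip: "\<And>y y'. norm (DF y - DF y') \<le> L * norm (y - y')"
    and L: "L > 0" and gpos: "\<gamma> > 0" and gL: "\<gamma> * L \<le> 1"
  shows "(norm (DF (x - \<gamma> *\<^sub>R g)))\<^sup>2 \<le> (norm (DF x))\<^sup>2 + \<gamma> * L * (norm (g - DF x))\<^sup>2"
proof -
  define a where "a = DF x"
  define d where "d = DF (x - \<gamma> *\<^sub>R g) - a"
  define e where "e = g - a"
  define c where "c = \<gamma> * L"
  have c: "0 < c" "c \<le> 1" using L gpos gL by (auto simp: c_def)
  have "(norm d)\<^sup>2 \<le> L * (d \<bullet> ((x - \<gamma> *\<^sub>R g) - x))"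
    unfolding d_def a_def by (rule convex_lipschitz_gradient_cocoercive[OF cv der lip L])
  then have "d \<bullet> d \<le> L * (d \<bullet> ((x - \<gamma> *\<^sub>R g) - x))"
    by (simp add: power2_norm_eq_inner)
  also have "\<dots> = - c * (d \<bullet> a) - c * (d \<bullet> e)"
    by (simp add: c_def e_def inner_diff_right algebra_simps)
  finally have coco: "c * (d \<bullet> a) \<le> - (d \<bullet> d) - c * (d \<bullet> e)"
    by simp
  have "c * (2 * (a \<bullet> d) + d \<bullet> d) \<le> 2 * (c * (d \<bullet> a)) + d \<bullet> d"
    using c by (simp add: inner_commute algebra_simps mult_left_le_one_le)
  also have "\<dots> \<le> - (d \<bullet> d) - 2 * c * (d \<bullet> e)"
    using coco by simp
  also have "\<dots> \<le> c * (c * (e \<bullet> e))"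
  proof -
    have "0 \<le> (d + c *\<^sub>R e) \<bullet> (d + c *\<^sub>R e)" by simp
    then show ?thesis
      by (simp add: inner_add_left inner_add_right inner_commute algebra_simps)
  qed
  finally have "2 * (a \<bullet> d) + d \<bullet> d \<le> c * (e \<bullet> e)"
    using c by simp
  moreover have "DF (x - \<gamma> *\<^sub>R g) = a + d" by (simp add: d_def)
  ultimately show ?thesis
    by (simp add: power2_norm_eq_inner inner_add_left inner_add_right inner_commute
        c_def e_def a_def[symmetric])
qed

lemma pearl_local_cong:
  "(\<And>s. s < t \<Longrightarrow> \<omega> s = \<omega>' s) \<Longrightarrow> pearl_local G \<gamma> x0 z \<omega> t = pearl_local G \<gamma> x0 z \<omega>' t"
  by (induction t) auto

lemma pearl_local_measurable:
  fixes G :: "'b \<Rightarrow> 'a::euclidean_space \<Rightarrow> 'c \<Rightarrow> 'a"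
  assumes meas: "(\<lambda>(\<xi>, y). G \<xi> y z) \<in> borel_measurable (D \<Otimes>\<^sub>M borel)"
    and "t \<le> k"
  shows "(\<lambda>\<omega>. pearl_local G \<gamma> x0 z \<omega> t) \<in> borel_measurable (PiM {..<k} (\<lambda>_. D))"
  using \<open>t \<le> k\<close>
proof (induction t)
  case (Suc t)
  then have IH: "(\<lambda>\<omega>. pearl_local G \<gamma> x0 z \<omega> t) \<in> borel_measurable (PiM {..<k} (\<lambda>_. D))"
    by simp
  have "(\<lambda>\<omega>. \<omega> t) \<in> measurable (PiM {..<k} (\<lambda>_. D)) D"
    using Suc.prems by (intro measurable_component_singleton) auto
  from measurable_compose[OF measurable_Pair[OF this IH] meas]
  have "(\<lambda>\<omega>. G (\<omega> t) (pearl_local G \<gamma> x0 z \<omega> t) z) \<in> borel_measurable (PiM {..<k} (\<lambda>_. D))"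
    by simp
  with IH show ?case by simp
qed simp

context
  fixes D :: "'b measure" and G :: "'b \<Rightarrow> 'a::euclidean_space \<Rightarrow> 'c \<Rightarrow> 'a"
    and DF :: "'a \<Rightarrow> 'a" and z :: 'c and \<gamma> c \<sigma> :: real
  assumes D: "prob_space D"
    and meas: "(\<lambda>(\<xi>, y). G \<xi> y z) \<in> borel_measurable (D \<Otimes>\<^sub>M borel)"
    and DF_measurable: "DF \<in> borel_measurable borel"
    and step: "\<And>x g. (norm (DF (x - \<gamma> *\<^sub>R g)))\<^sup>2 \<le> (norm (DF x))\<^sup>2 + c * (norm (g - DF x))\<^sup>2"
    and BV: "\<And>y. (\<integral>\<^sup>+\<xi>. ennreal ((norm (G \<xi> y z - DF y))\<^sup>2) \<partial>D) \<le> ennreal (\<sigma>\<^sup>2)"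
    and c: "c \<ge> 0"
begin

interpretation D: prob_space D by (rule D)

lemma expected_gradient_norm_one_step:
  "(\<integral>\<^sup>+\<xi>. ennreal ((norm (DF (x - \<gamma> *\<^sub>R G \<xi> x z)))\<^sup>2) \<partial>D)
     \<le> ennreal ((norm (DF x))\<^sup>2) + ennreal (c * \<sigma>\<^sup>2)"
proof -
  have "(\<lambda>\<xi>. G \<xi> x z) \<in> borel_measurable D"
  proof -
    have "(\<lambda>\<xi>. (\<xi>, x)) \<in> measurable D (D \<Otimes>\<^sub>M borel)"
      by (intro measurable_Pair measurable_ident_sets measurable_const) auto
    from measurable_compose[OF this meas] show ?thesis by simp
  qed
  then have "(\<integral>\<^sup>+\<xi>. ennreal ((norm (DF (x - \<gamma> *\<^sub>R G \<xi> x z)))\<^sup>2) \<partial>D)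
      \<le> (\<integral>\<^sup>+\<xi>. ennreal ((norm (DF x))\<^sup>2) + ennreal c * ennreal ((norm (G \<xi> x z - DF x))\<^sup>2) \<partial>D)"
    using step c
    by (intro nn_integral_mono)
      (simp add: ennreal_mult[symmetric] ennreal_plus[symmetric] del: ennreal_plus)
  also have "\<dots> = ennreal ((norm (DF x))\<^sup>2)
      + ennreal c * (\<integral>\<^sup>+\<xi>. ennreal ((norm (G \<xi> x z - DF x))\<^sup>2) \<partial>D)"
    using \<open>(\<lambda>\<xi>. G \<xi> x z) \<in> borel_measurable D\<close>
    by (subst nn_integral_add) (auto simp: nn_integral_cmult D.emeasure_space_1)
  also have "\<dots> \<le> ennreal ((norm (DF x))\<^sup>2) + ennreal c * ennreal (\<sigma>\<^sup>2)"
    using BV by (intro add_left_mono mult_left_mono) auto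
  finally show ?thesis
    using c by (simp add: ennreal_mult)
qed

lemma expected_gradient_norm_pearl_local:
  "(\<integral>\<^sup>+\<omega>. ennreal ((norm (DF (pearl_local G \<gamma> x0 z \<omega> k)))\<^sup>2) \<partial>(PiM {..<k} (\<lambda>_. D)))
     \<le> ennreal ((norm (DF x0))\<^sup>2 + real k * c * \<sigma>\<^sup>2)"
proof (induction k)
  case 0
  interpret P: prob_space "PiM ({}::nat set) (\<lambda>_. D)"
    by (rule prob_space_PiM) (simp add: D)
  show ?case by (simp add: P.emeasure_space_1)
next
  case (Suc k)
  interpret PS: product_sigma_finite "\<lambda>_. D"
    unfolding product_sigma_finite_def by (simp add: D.sigma_finite_measure_axioms)
  interpret P: prob_space "PiM {..<k} (\<lambda>_. D)"
    by (rule prob_space_PiM) (simp add: D)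
  let ?X = "\<lambda>t \<omega>. pearl_local G \<gamma> x0 z \<omega> t"
  let ?N = "\<lambda>x. ennreal ((norm (DF x))\<^sup>2)"
  have N_measurable: "(\<lambda>\<omega>. ?N (?X t \<omega>)) \<in> borel_measurable (PiM {..<k'} (\<lambda>_. D))"
    if "t \<le> k'" for t k'
    using measurable_compose[OF pearl_local_measurable[where G=G and z=z, OF meas that] DF_measurable]
    by measurable
  have "(\<integral>\<^sup>+x. ?N (?X (Suc k) x) \<partial>(PiM {..<Suc k} (\<lambda>_. D)))
      = (\<integral>\<^sup>+x. (\<integral>\<^sup>+\<xi>. ?N (?X (Suc k) (x(k := \<xi>))) \<partial>D) \<partial>(PiM {..<k} (\<lambda>_. D)))"
    using N_measurable[of "Suc k" "Suc k"] unfolding lessThan_Suc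
    by (intro PS.product_nn_integral_insert) auto
  also have "\<dots> \<le> (\<integral>\<^sup>+x. ?N (?X k x) + ennreal (c * \<sigma>\<^sup>2) \<partial>(PiM {..<k} (\<lambda>_. D)))"
  proof (rule nn_integral_mono)
    fix x
    have "?X k (x(k := \<xi>)) = ?X k x" for \<xi>
      by (rule pearl_local_cong) auto
    then show "(\<integral>\<^sup>+\<xi>. ?N (?X (Suc k) (x(k := \<xi>))) \<partial>D) \<le> ?N (?X k x) + ennreal (c * \<sigma>\<^sup>2)"
      using expected_gradient_norm_one_step[of "?X k x"] by simp
  qed
  also have "\<dots> = (\<integral>\<^sup>+\<omega>. ?N (?X k \<omega>) \<partial>(PiM {..<k} (\<lambda>_. D))) + ennreal (c * \<sigma>\<^sup>2)"
    using N_measurable[of k k] by (subst nn_integral_add) (auto simp: P.emeasure_space_1)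
  also have "\<dots> \<le> ennreal ((norm (DF x0))\<^sup>2 + real k * c * \<sigma>\<^sup>2) + ennreal (c * \<sigma>\<^sup>2)"
    using Suc.IH by (rule add_right_mono)
  also have "\<dots> = ennreal ((norm (DF x0))\<^sup>2 + real (Suc k) * c * \<sigma>\<^sup>2)"
    using c by (subst ennreal_plus[symmetric]) (auto simp: algebra_simps)
  finally show ?case .
qed

end

theorem lemma3:
  fixes D :: "'b measure"
    and f :: "'a::euclidean_space \<Rightarrow> 'c \<Rightarrow> real"
    and gf :: "'a \<Rightarrow> 'c \<Rightarrow> 'a"
    and fxi :: "'b \<Rightarrow> 'a \<Rightarrow> 'c \<Rightarrow> real"
    and G :: "'b \<Rightarrow> 'a \<Rightarrow> 'c \<Rightarrow> 'a"
    and L \<sigma> \<gamma> :: real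
    and \<tau> p j :: nat
    and x0 :: 'a and z :: 'c
  assumes D: "prob_space D"
    and grad: "\<forall>y w. ((\<lambda>u. f u w) has_derivative (\<lambda>h. gf y w \<bullet> h)) (at y)"
    and sgrad: "\<forall>\<xi>\<in>space D. \<forall>y w. ((\<lambda>u. fxi \<xi> u w) has_derivative (\<lambda>h. G \<xi> y w \<bullet> h)) (at y)"
    and fexp: "\<forall>y w. integrable D (\<lambda>\<xi>. fxi \<xi> y w) \<and> f y w = (\<integral>\<xi>. fxi \<xi> y w \<partial>D)"
    and unbiased: "\<forall>y w. integrable D (\<lambda>\<xi>. G \<xi> y w) \<and> (\<integral>\<xi>. G \<xi> y w \<partial>D) = gf y w"
    and meas: "\<forall>w. (\<lambda>(\<xi>, y). G \<xi> y w) \<in> borel_measurable (D \<Otimes>\<^sub>M borel)"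
    and CVX: "\<forall>w. convex_on UNIV (\<lambda>u. f u w)"
    and SM: "\<forall>w y y'. norm (gf y w - gf y' w) \<le> L * norm (y - y')"
    and BV: "\<forall>y w. (\<integral>\<^sup>+\<xi>. ennreal ((norm (G \<xi> y w - gf y w))\<^sup>2) \<partial>D) \<le> ennreal (\<sigma>\<^sup>2)"
    and tau: "\<tau> \<ge> 1"
    and Lpos: "L > 0"
    and gpos: "\<gamma> > 0"
    and g1: "\<gamma> \<le> 1 / L"
    and g2: "\<tau> \<ge> 2 \<longrightarrow> \<gamma> \<le> 1 / (L * real (\<tau> - 1))"
    and j: "\<tau> * p + 1 \<le> j" "j \<le> \<tau> * (p + 1)"
  shows "(\<integral>\<^sup>+\<omega>. ennreal ((norm (gf (pearl_local G \<gamma> x0 z \<omega> (j - \<tau> * p)) z))\<^sup>2)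
            \<partial>(PiM {..<j - \<tau> * p} (\<lambda>_. D)))
         \<le> ennreal ((norm (gf x0 z))\<^sup>2 + 2 * real (j - \<tau> * p) * \<gamma> * L * \<sigma>\<^sup>2)"
proof -
  define k where "k = j - \<tau> * p"
  have lip: "\<And>y y'. norm (gf y z - gf y' z) \<le> L * norm (y - y')"
    using SM by blast
  have "\<gamma> * L \<le> 1"
    using g1 Lpos by (simp add: field_simps)
  with CVX grad lip Lpos gpos
  have step: "\<And>x g. (norm (gf (x - \<gamma> *\<^sub>R g) z))\<^sup>2 \<le> (norm (gf x z))\<^sup>2 + \<gamma> * L * (norm (g - gf x z))\<^sup>2"
    by (intro gradient_norm_after_step_le[where F="\<lambda>u. f u z"]) auto
  have "continuous_on UNIV (\<lambda>y. gf y z)"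
    using lip Lpos by (intro lipschitz_on_continuous_on[where L=L]) (auto simp: lipschitz_on_def dist_norm)
  then have "(\<lambda>y. gf y z) \<in> borel_measurable borel"
    by (rule borel_measurable_continuous_onI)
  moreover have "(\<lambda>(\<xi>, y). G \<xi> y z) \<in> borel_measurable (D \<Otimes>\<^sub>M borel)"
    using meas by blast
  moreover have "\<And>y. (\<integral>\<^sup>+\<xi>. ennreal ((norm (G \<xi> y z - gf y z))\<^sup>2) \<partial>D) \<le> ennreal (\<sigma>\<^sup>2)"
    using BV by blast
  ultimately have "(\<integral>\<^sup>+\<omega>. ennreal ((norm (gf (pearl_local G \<gamma> x0 z \<omega> k) z))\<^sup>2) \<partial>(PiM {..<k} (\<lambda>_. D)))
      \<le> ennreal ((norm (gf x0 z))\<^sup>2 + real k * (\<gamma> * L) * \<sigma>\<^sup>2)"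
    using gpos Lpos by (intro expected_gradient_norm_pearl_local[OF D _ _ step]) auto
  also have "\<dots> \<le> ennreal ((norm (gf x0 z))\<^sup>2 + 2 * real k * \<gamma> * L * \<sigma>\<^sup>2)"
    using gpos Lpos by (intro ennreal_leI) (simp add: algebra_simps)
  finally show ?thesis unfolding k_def .
qed

end
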